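(* The special monoid $\Pi_2=\langle a,b,c\mid (ab^ic)^2=1\ (i\geq 1)\rangle$ has context-free word problem, and none of its maximal subgroups is finitely generated.
   Context: For a monoid $M$ with finite generating set $A$, the word problem of $M$ with respect to $A$ is the language $\{u\#v^{\mathrm{rev}} \mid u,v\in A^\ast,\ u=_M v\}$, where $\#\notin A$ and $v^{\mathrm{rev}}$ is the reversal of $v$; $M$ has context-free word problem if this language is context-free. For an idempotent $e$ of $M$, the maximal subgroup of $M$ containing $e$ is the group of units of $eMe$. *)

theory Defs
  imports "HOL-Algebra.Generated_Groups"
begin

text \<open>A context-free grammar is given by a set of productions (A, w) with A a
nonterminal (of type nat) and w a word over nonterminals (Inl) and terminals (Inr).\<close>

inductive cfg_step :: "(nat \<times> (nat + 't) list) set \<Rightarrow> (nat + 't) list \<Rightarrow> (nat + 't) list \<Rightarrow> bool"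
  for P where
  "(A, w) \<in> P \<Longrightarrow> cfg_step P (u @ [Inl A] @ v) (u @ w @ v)"

definition cfg_lang :: "(nat \<times> (nat + 't) list) set \<Rightarrow> nat \<Rightarrow> 't list set" where
  "cfg_lang P S = {w. (cfg_step P)\<^sup>*\<^sup>* [Inl S] (map Inr w)}"

definition context_free :: "'t list set \<Rightarrow> bool" where
  "context_free L \<longleftrightarrow> (\<exists>P S. finite P \<and> L = cfg_lang P S)"

inductive pres_eq :: "('g list \<times> 'g list) set \<Rightarrow> 'g list \<Rightarrow> 'g list \<Rightarrow> bool"
  for R where
  refl: "pres_eq R u u"
| sym: "pres_eq R u v \<Longrightarrow> pres_eq R v u"
| trans: "pres_eq R u v \<Longrightarrow> pres_eq R v w \<Longrightarrow> pres_eq R u w"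
| rel: "(l, r) \<in> R \<Longrightarrow> pres_eq R (x @ l @ y) (x @ r @ y)"

definition pres_class :: "('g list \<times> 'g list) set \<Rightarrow> 'g list \<Rightarrow> 'g list set" where
  "pres_class R u = {v. pres_eq R u v}"

definition pres_monoid :: "('g list \<times> 'g list) set \<Rightarrow> 'g list set monoid" where
  "pres_monoid R = \<lparr> carrier = range (pres_class R),
     mult = (\<lambda>X Y. {w. \<exists>x\<in>X. \<exists>y\<in>Y. pres_eq R (x @ y) w}),
     one = pres_class R [] \<rparr>"

datatype 'g wp_sym = Letter 'g | Hash

definition word_problem :: "('g list \<times> 'g list) set \<Rightarrow> 'g wp_sym list set" where
  "word_problem R = {map Letter u @ [Hash] @ map Letter (rev v) | u v. pres_eq R u v}"

definition local_monoid :: "('a, 'b) monoid_scheme \<Rightarrow> 'a \<Rightarrow> 'a monoid" where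
  "local_monoid M e = \<lparr> carrier = {e \<otimes>\<^bsub>M\<^esub> x \<otimes>\<^bsub>M\<^esub> e | x. x \<in> carrier M},
     mult = mult M, one = e \<rparr>"

definition idempotent_of :: "('a, 'b) monoid_scheme \<Rightarrow> 'a \<Rightarrow> bool" where
  "idempotent_of M e \<longleftrightarrow> e \<in> carrier M \<and> e \<otimes>\<^bsub>M\<^esub> e = e"

text \<open>Maximal subgroup containing e: the group of units of eMe.\<close>

definition maximal_subgroup :: "('a, 'b) monoid_scheme \<Rightarrow> 'a \<Rightarrow> 'a monoid" where
  "maximal_subgroup M e = units_of (local_monoid M e)"

definition finitely_generated_group :: "('a, 'b) monoid_scheme \<Rightarrow> bool" where
  "finitely_generated_group G \<longleftrightarrow>
     (\<exists>S. finite S \<and> S \<subseteq> carrier G \<and> generate G S = carrier G)"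

datatype gen = a | b | c

definition Pi2_rels :: "(gen list \<times> gen list) set" where
  "Pi2_rels = {((a # replicate i b @ [c]) @ (a # replicate i b @ [c]), []) | i. i \<ge> 1}"

definition Pi2 :: "gen list set monoid" where
  "Pi2 = pres_monoid Pi2_rels"

end

theory Submission
  imports Defs
begin

text \<open>The relations \<open>(a b\<^sup>i c)\<^sup>2 = 1\<close> form a complete rewriting system: two relators overlap
  only trivially, so cancelling relators greedily while a word is read from left to right yields a
  normal form, and two words are equal in \<open>\<Pi>\<^sub>2\<close> iff their normal forms agree. A word equal to \<open>1\<close>
  is built by nesting relators, which a context-free grammar can follow; padding the normal form of
  \<open>u\<close> with such words on both sides of \<open>#\<close> gives a grammar for the word problem.

  Every idempotent is the class of a reduced word \<open>X Y\<close> with \<open>Y X = 1\<close>. Conjugation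
  \<open>w \<mapsto> Y w X\<close> is multiplicative on \<open>eMe\<close> and sends its units to invertible reduced words,
  and these are exactly the products of the pieces \<open>a b\<^sup>i c\<close>. A finite set of units therefore
  only produces pieces \<open>a b\<^sup>i c\<close> with \<open>i \<le> N\<close>, but the unit \<open>X a b\<^sup>N\<^sup>+\<^sup>1 c Y\<close> is sent to
  \<open>a b\<^sup>N\<^sup>+\<^sup>1 c\<close>.\<close>

section \<open>Monoid presentations and local monoids\<close>

lemma pres_eq_context: "pres_eq R u v \<Longrightarrow> pres_eq R (p @ u @ q) (p @ v @ q)"
proof (induction rule: pres_eq.induct)
  case (rel l r x y)
  then show ?case using pres_eq.rel[OF rel, of "p @ x" "y @ q"] by simp
qed (auto intro: pres_eq.intros)

lemma pres_eq_append: "pres_eq R u u' \<Longrightarrow> pres_eq R v v' \<Longrightarrow> pres_eq R (u @ v) (u' @ v')"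
  using pres_eq_context[of R u u' "[]" v] pres_eq_context[of R v v' u' "[]"]
  by (simp add: pres_eq.trans)

lemma pres_class_eq_iff: "pres_class R u = pres_class R v \<longleftrightarrow> pres_eq R u v"
  unfolding pres_class_def by (auto intro: pres_eq.intros)

lemma pres_monoid_mult_class:
  "pres_class R u \<otimes>\<^bsub>pres_monoid R\<^esub> pres_class R v = pres_class R (u @ v)"
  by (auto simp: pres_monoid_def pres_class_def intro: pres_eq.refl pres_eq.trans pres_eq_append)

lemma monoid_pres_monoid: "monoid (pres_monoid R)"
proof (rule monoidI)
  have carrier: "carrier (pres_monoid R) = range (pres_class R)"
    and one: "\<one>\<^bsub>pres_monoid R\<^esub> = pres_class R []"
    by (simp_all add: pres_monoid_def)
  fix x y z assume "x \<in> carrier (pres_monoid R)" "y \<in> carrier (pres_monoid R)"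
    "z \<in> carrier (pres_monoid R)"
  then obtain u v w where "x = pres_class R u" "y = pres_class R v" "z = pres_class R w"
    unfolding carrier by blast
  then show "x \<otimes>\<^bsub>pres_monoid R\<^esub> y \<in> carrier (pres_monoid R)"
    "x \<otimes>\<^bsub>pres_monoid R\<^esub> y \<otimes>\<^bsub>pres_monoid R\<^esub> z =
      x \<otimes>\<^bsub>pres_monoid R\<^esub> (y \<otimes>\<^bsub>pres_monoid R\<^esub> z)"
    "\<one>\<^bsub>pres_monoid R\<^esub> \<otimes>\<^bsub>pres_monoid R\<^esub> x = x"
    "x \<otimes>\<^bsub>pres_monoid R\<^esub> \<one>\<^bsub>pres_monoid R\<^esub> = x"
    by (simp_all add: carrier one pres_monoid_mult_class)
qed (simp add: pres_monoid_def)

lemma monoid_local_monoid: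
  assumes M: "monoid M" and e: "idempotent_of M e"
  shows "monoid (local_monoid M e)"
proof -
  interpret monoid M by (fact M)
  have e_in: "e \<in> carrier M" and ee: "e \<otimes>\<^bsub>M\<^esub> e = e"
    using e by (auto simp: idempotent_of_def)
  have local_carrier: "x \<in> carrier (local_monoid M e) \<longleftrightarrow>
      (\<exists>u \<in> carrier M. x = e \<otimes>\<^bsub>M\<^esub> u \<otimes>\<^bsub>M\<^esub> e)" for x
    unfolding local_monoid_def by auto
  have local_mult: "x \<otimes>\<^bsub>local_monoid M e\<^esub> y = x \<otimes>\<^bsub>M\<^esub> y" for x y
    by (simp add: local_monoid_def)
  have local_one: "\<one>\<^bsub>local_monoid M e\<^esub> = e"
    by (simp add: local_monoid_def)
  have local_sub: "x \<in> carrier M" if "x \<in> carrier (local_monoid M e)" for x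
    using that e_in unfolding local_carrier by auto
  have absorb: "e \<otimes>\<^bsub>M\<^esub> x = x" "x \<otimes>\<^bsub>M\<^esub> e = x"
    if "x \<in> carrier (local_monoid M e)" for x
  proof -
    from that obtain u where u: "u \<in> carrier M" and x: "x = e \<otimes>\<^bsub>M\<^esub> u \<otimes>\<^bsub>M\<^esub> e"
      by (auto simp: local_carrier)
    have "e \<otimes>\<^bsub>M\<^esub> x = (e \<otimes>\<^bsub>M\<^esub> e) \<otimes>\<^bsub>M\<^esub> u \<otimes>\<^bsub>M\<^esub> e"
      "x \<otimes>\<^bsub>M\<^esub> e = e \<otimes>\<^bsub>M\<^esub> u \<otimes>\<^bsub>M\<^esub> (e \<otimes>\<^bsub>M\<^esub> e)"
      unfolding x using u e_in by (simp_all add: m_assoc)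
    then show "e \<otimes>\<^bsub>M\<^esub> x = x" "x \<otimes>\<^bsub>M\<^esub> e = x" unfolding ee x .
  qed
  show ?thesis
  proof (rule monoidI, unfold local_mult local_one)
    fix x y assume x: "x \<in> carrier (local_monoid M e)" and y: "y \<in> carrier (local_monoid M e)"
    have "x \<otimes>\<^bsub>M\<^esub> y = (e \<otimes>\<^bsub>M\<^esub> x) \<otimes>\<^bsub>M\<^esub> (y \<otimes>\<^bsub>M\<^esub> e)"
      using absorb(1)[OF x] absorb(2)[OF y] by simp
    also have "\<dots> = e \<otimes>\<^bsub>M\<^esub> (x \<otimes>\<^bsub>M\<^esub> y) \<otimes>\<^bsub>M\<^esub> e"
      using local_sub[OF x] local_sub[OF y] e_in by (simp add: m_assoc)
    finally have "x \<otimes>\<^bsub>M\<^esub> y = e \<otimes>\<^bsub>M\<^esub> (x \<otimes>\<^bsub>M\<^esub> y) \<otimes>\<^bsub>M\<^esub> e" .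
    then show "x \<otimes>\<^bsub>M\<^esub> y \<in> carrier (local_monoid M e)"
      using x y local_sub unfolding local_carrier by blast
  next
    show "e \<in> carrier (local_monoid M e)"
      using e_in ee unfolding local_carrier by (metis r_one one_closed m_assoc)
  next
    fix x y z assume "x \<in> carrier (local_monoid M e)" "y \<in> carrier (local_monoid M e)"
      "z \<in> carrier (local_monoid M e)"
    then show "x \<otimes>\<^bsub>M\<^esub> y \<otimes>\<^bsub>M\<^esub> z = x \<otimes>\<^bsub>M\<^esub> (y \<otimes>\<^bsub>M\<^esub> z)"
      using local_sub m_assoc by blast
  qed (fact absorb)+
qed

section \<open>Context-free grammars\<close>

abbreviation cfg_derives ::
    "(nat \<times> (nat + 't) list) set \<Rightarrow> (nat + 't) list \<Rightarrow> (nat + 't) list \<Rightarrow> bool"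
  where "cfg_derives P \<equiv> (cfg_step P)\<^sup>*\<^sup>*"

lemma cfg_derives_context:
  "cfg_derives P x y \<Longrightarrow> cfg_derives P (p @ x @ q) (p @ y @ q)"
proof (induction rule: rtranclp_induct)
  case (step y z)
  from step.hyps(2) obtain u A v w where "y = u @ [Inl A] @ v" "z = u @ w @ v" "(A, w) \<in> P"
    by (cases rule: cfg_step.cases) auto
  then have "cfg_step P ((p @ u) @ [Inl A] @ (v @ q)) ((p @ u) @ w @ (v @ q))"
    by (intro cfg_step.intros)
  with step.IH \<open>y = _\<close> \<open>z = _\<close> show ?case by simp
qed simp

lemma cfg_derives_append:
  "cfg_derives P x x' \<Longrightarrow> cfg_derives P y y' \<Longrightarrow> cfg_derives P (x @ y) (x' @ y')"
  using cfg_derives_context[of P x x' "[]" y] cfg_derives_context[of P y y' x' "[]"] by simp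

lemma cfg_derives_production:
  assumes "(A, xs) \<in> P" and "list_all2 (\<lambda>x w. cfg_derives P [x] w) xs ws" and "concat ws = v"
  shows "cfg_derives P [Inl A] v"
proof -
  have "cfg_step P [Inl A] xs"
    using cfg_step.intros[OF assms(1), of "[]" "[]"] by simp
  moreover from assms(2) have "cfg_derives P xs (concat ws)"
    by (induction rule: list_all2_induct) (simp_all add: cfg_derives_append[of P "[_]", simplified])
  ultimately show ?thesis using assms(3) by (simp add: converse_rtranclp_into_rtranclp)
qed

fun sentential_lang :: "(nat \<Rightarrow> 't list set) \<Rightarrow> (nat + 't) list \<Rightarrow> 't list set" where
  "sentential_lang L [] = {[]}"
| "sentential_lang L (Inr t # xs) = Cons t ` sentential_lang L xs"
| "sentential_lang L (Inl A # xs) = {u @ w | u w. u \<in> L A \<and> w \<in> sentential_lang L xs}"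

lemma sentential_lang_append:
  "sentential_lang L (xs @ ys) = {u @ w | u w. u \<in> sentential_lang L xs \<and> w \<in> sentential_lang L ys}"
proof (induction xs)
  case (Cons x xs)
  then show ?case
    by (cases x) (auto simp: image_def, (metis append.assoc append_Cons)+)
qed simp

lemma cfg_lang_subset:
  assumes sound: "\<And>A w. (A, w) \<in> P \<Longrightarrow> sentential_lang L w \<subseteq> L A"
  shows "cfg_lang P S \<subseteq> L S"
proof
  have step: "sentential_lang L y \<subseteq> sentential_lang L x" if "cfg_step P x y" for x y
    using that
  proof cases
    case (1 A w u v)
    then have "sentential_lang L w \<subseteq> sentential_lang L [Inl A]" using sound by auto
    with 1 show ?thesis by (auto simp only: sentential_lang_append) blast
  qed
  have derives: "sentential_lang L y \<subseteq> sentential_lang L x" if "cfg_derives P x y" for x y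
    using that by (induction rule: rtranclp_induct) (use step in blast)+
  have terminal: "sentential_lang L (map Inr w) = {w}" for w
    by (induction w) auto
  fix w assume "w \<in> cfg_lang P S"
  then show "w \<in> L S"
    using derives[of "[Inl S]" "map Inr w"] by (auto simp: cfg_lang_def terminal)
qed

section \<open>Normal forms in \<open>\<Pi>\<^sub>2\<close>\<close>

definition piece :: "nat \<Rightarrow> gen list" where
  "piece i = a # replicate i b @ [c]"

definition relator :: "nat \<Rightarrow> gen list" where
  "relator i = piece i @ piece i"

lemma Pi2_rels_relator: "Pi2_rels = {(relator i, []) | i. i \<ge> 1}"
  unfolding Pi2_rels_def relator_def piece_def by simp

lemma piece_not_Nil [simp]: "piece i \<noteq> []"
  by (simp add: piece_def)

lemma relator_not_Nil [simp]: "relator i \<noteq> []"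
  by (simp add: relator_def)

lemma last_piece [simp]: "last (piece i) = c"
  by (simp add: piece_def)

lemma last_relator [simp]: "last (relator i) = c"
  by (simp add: relator_def)

lemma piece_suffix_unique:
  assumes "x @ piece i = y @ piece j" shows "i = j \<and> x = y"
proof -
  have rev_piece: "rev (x @ piece i) = c # replicate i b @ a # rev x" for x i
    by (simp add: piece_def)
  have replicate_inj: "replicate i b @ a # u = replicate j b @ a # v \<Longrightarrow> i = j \<and> u = v" for u v
  proof (induction i arbitrary: j)
    case 0 then show ?case by (cases j) auto
  next
    case (Suc i) then show ?case by (cases j) auto
  qed
  have "replicate i b @ a # rev x = replicate j b @ a # rev y"
    using arg_cong[OF assms, of rev] by (simp only: rev_piece list.inject)
  from replicate_inj[OF this] show ?thesis by simp
qed

lemma relator_suffix_unique: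
  assumes "p @ relator i = q @ relator j" shows "i = j \<and> p = q"
proof -
  have "(p @ piece i) @ piece i = (q @ piece j) @ piece j"
    using assms by (simp add: relator_def)
  then have "i = j" "p @ piece i = q @ piece j"
    using piece_suffix_unique by blast+
  then show ?thesis using piece_suffix_unique by blast
qed

definition strip_relator :: "gen list \<Rightarrow> gen list" where
  "strip_relator w = (if \<exists>p i. i \<ge> 1 \<and> w = p @ relator i
     then THE p. \<exists>i. i \<ge> 1 \<and> w = p @ relator i else w)"

definition nf_step :: "gen list \<Rightarrow> gen \<Rightarrow> gen list" where
  "nf_step s x = strip_relator (s @ [x])"

definition nf :: "gen list \<Rightarrow> gen list" where
  "nf w = foldl nf_step [] w"

definition reduced :: "gen list \<Rightarrow> bool" where
  "reduced s \<longleftrightarrow> \<not> (\<exists>p q i. i \<ge> 1 \<and> s = p @ relator i @ q)"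

lemma strip_relator_relator:
  assumes "i \<ge> 1" shows "strip_relator (p @ relator i) = p"
proof -
  have "(THE q. \<exists>j. j \<ge> 1 \<and> p @ relator i = q @ relator j) = p"
    using assms relator_suffix_unique by (intro the_equality) blast+
  with assms show ?thesis unfolding strip_relator_def by auto
qed

lemma strip_relator_id: "\<not> (\<exists>p i. i \<ge> 1 \<and> w = p @ relator i) \<Longrightarrow> strip_relator w = w"
  unfolding strip_relator_def by (rule if_not_P)

lemma strip_relator_snoc: "x \<noteq> c \<Longrightarrow> strip_relator (w @ [x]) = w @ [x]"
  by (rule strip_relator_id) (metis last_relator last_snoc relator_not_Nil last_appendR)

lemma nf_Nil [simp]: "nf [] = []"
  by (simp add: nf_def)

lemma nf_append: "nf (u @ v) = foldl nf_step (nf u) v"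
  by (simp add: nf_def)

lemma nf_snoc: "nf (u @ [x]) = strip_relator (nf u @ [x])"
  by (simp add: nf_def nf_step_def)

lemma reduced_appendD: "reduced (s @ t) \<Longrightarrow> reduced s \<and> reduced t"
  unfolding reduced_def by (metis append.assoc)

lemma reduced_Nil: "reduced []"
  by (simp add: reduced_def)

lemma reduced_nf_step:
  assumes "reduced s" shows "reduced (nf_step s x)"
proof (cases "\<exists>p i. i \<ge> 1 \<and> s @ [x] = p @ relator i")
  case True
  then obtain p i where i: "i \<ge> 1" and eq: "s @ [x] = p @ relator i" by blast
  have "s = p @ butlast (relator i)"
    using arg_cong[OF eq, of butlast] by (simp add: butlast_append)
  then have "reduced p" using assms reduced_appendD by blast
  then show ?thesis using i eq by (simp add: nf_step_def strip_relator_relator)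
next
  case False
  have "reduced (s @ [x])" unfolding reduced_def
  proof clarify
    fix p q i assume i: "i \<ge> 1" and eq: "s @ [x] = p @ relator i @ q"
    show False
    proof (cases q rule: rev_cases)
      case Nil
      with eq have "s @ [x] = p @ relator i" by simp
      with False i show False by blast
    next
      case (snoc q' y)
      with eq have "s = p @ relator i @ q'" by simp
      with assms i show False unfolding reduced_def by blast
    qed
  qed
  with False show ?thesis by (simp add: nf_step_def strip_relator_id)
qed

lemma reduced_nf: "reduced (nf w)"
proof -
  have "reduced (foldl nf_step s w)" if "reduced s" for s
    using that by (induction w arbitrary: s) (auto simp: reduced_nf_step)
  then show ?thesis by (simp add: nf_def reduced_Nil)
qed

lemma nf_reduced: "reduced s \<Longrightarrow> nf s = s"
proof (induction s rule: rev_induct)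
  case (snoc x s)
  then have "\<not> (\<exists>p i. i \<ge> 1 \<and> s @ [x] = p @ relator i)"
    unfolding reduced_def by (metis append_Nil2)
  moreover have "nf s = s" using snoc reduced_appendD by blast
  ultimately show ?case by (simp add: nf_snoc strip_relator_id)
qed simp

lemma nf_reduced_append: "reduced s \<Longrightarrow> nf (s @ w) = foldl nf_step s w"
  by (simp add: nf_append nf_reduced)

lemma foldl_nf_step_piece: "foldl nf_step s (piece i) = strip_relator (s @ piece i)"
proof -
  have no_c: "foldl nf_step s w = s @ w" if "c \<notin> set w" for s w
    using that by (induction w arbitrary: s) (auto simp: nf_step_def strip_relator_snoc)
  have "foldl nf_step s (piece i) = nf_step (foldl nf_step s (a # replicate i b)) c"
    by (simp add: piece_def)
  moreover have "foldl nf_step s (a # replicate i b) = s @ a # replicate i b"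
    by (rule no_c) simp
  ultimately show ?thesis by (simp add: nf_step_def piece_def)
qed

text \<open>Relators overlap only trivially, so reading a relator into a reduced word cancels it again:
  this is the local confluence of the rewriting system.\<close>

lemma foldl_nf_step_relator:
  assumes "reduced s" and "i \<ge> 1"
  shows "foldl nf_step s (relator i) = s"
proof -
  have strip_s: "strip_relator s = s"
    using assms(1) unfolding reduced_def by (intro strip_relator_id) (metis append_Nil2)
  have "foldl nf_step s (relator i) = foldl nf_step (strip_relator (s @ piece i)) (piece i)"
    by (simp add: relator_def foldl_nf_step_piece)
  also have "\<dots> = s"
  proof (cases "\<exists>p j. j \<ge> 1 \<and> s @ piece i = p @ relator j")
    case True
    then obtain p j where j: "j \<ge> 1" "s @ piece i = (p @ piece j) @ piece j"
      by (auto simp: relator_def)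
    then have "i = j" "s = p @ piece i" using piece_suffix_unique by blast+
    with j have "strip_relator (s @ piece i) = p"
      using strip_relator_relator[of j p] by (simp add: relator_def)
    with \<open>s = p @ piece i\<close> strip_s show ?thesis by (simp add: foldl_nf_step_piece)
  next
    case False
    then show ?thesis
      using assms(2) strip_relator_relator[of i s]
      by (simp add: relator_def foldl_nf_step_piece strip_relator_id)
  qed
  finally show ?thesis .
qed

abbreviation Pi2_eq :: "gen list \<Rightarrow> gen list \<Rightarrow> bool" where
  "Pi2_eq \<equiv> pres_eq Pi2_rels"

lemma Pi2_eq_relator: "i \<ge> 1 \<Longrightarrow> Pi2_eq (p @ relator i @ q) (p @ q)"
  using pres_eq.rel[of "relator i" "[]" Pi2_rels p q] by (auto simp: Pi2_rels_relator)

lemma Pi2_eq_strip_relator: "Pi2_eq w (strip_relator w)"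
proof (cases "\<exists>p i. i \<ge> 1 \<and> w = p @ relator i")
  case True
  then obtain p i where "i \<ge> 1" "w = p @ relator i" by blast
  then show ?thesis using Pi2_eq_relator[of i p "[]"] by (simp add: strip_relator_relator)
qed (simp add: strip_relator_id pres_eq.refl)

lemma Pi2_eq_nf: "Pi2_eq u (nf u)"
proof (induction u rule: rev_induct)
  case (snoc x u)
  have "Pi2_eq (u @ [x]) (nf u @ [x])"
    by (rule pres_eq_append[OF snoc.IH pres_eq.refl])
  then show ?case
    using Pi2_eq_strip_relator by (metis nf_snoc pres_eq.trans)
qed (simp add: pres_eq.refl)

lemma nf_relator: "i \<ge> 1 \<Longrightarrow> nf (p @ relator i @ q) = nf (p @ q)"
  using foldl_nf_step_relator[OF reduced_nf]
  by (simp add: nf_append[of "p @ relator i"] nf_append[of p])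

theorem Pi2_eq_iff_nf: "Pi2_eq u v \<longleftrightarrow> nf u = nf v"
proof
  show "Pi2_eq u v \<Longrightarrow> nf u = nf v"
    by (induction rule: pres_eq.induct) (auto simp: Pi2_rels_relator nf_relator)
next
  assume "nf u = nf v"
  then show "Pi2_eq u v"
    using Pi2_eq_nf[of u] Pi2_eq_nf[of v] by (metis pres_eq.sym pres_eq.trans)
qed

lemma nf_context: "nf u = nf u' \<Longrightarrow> nf (p @ u @ q) = nf (p @ u' @ q)"
  using pres_eq_context Pi2_eq_iff_nf by metis

lemma nf_nf_append: "nf (nf u @ v) = nf (u @ v)"
  using nf_context[of "nf u" u "[]" v] by (simp add: nf_reduced reduced_nf)

lemma nf_append_nf: "nf (u @ nf v) = nf (u @ v)"
  using nf_context[of "nf v" v u "[]"] by (simp add: nf_reduced reduced_nf)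

lemma nf_append_Nil: "nf u = [] \<Longrightarrow> nf (p @ u @ q) = nf (p @ q)"
  using nf_context[of u "[]" p q] by simp

abbreviation Pi2_class :: "gen list \<Rightarrow> gen list set" where
  "Pi2_class \<equiv> pres_class Pi2_rels"

lemma Pi2_class_eq_iff: "Pi2_class u = Pi2_class v \<longleftrightarrow> nf u = nf v"
  by (simp add: pres_class_eq_iff Pi2_eq_iff_nf)

lemma Pi2_carrier: "carrier Pi2 = range Pi2_class"
  by (simp add: Pi2_def pres_monoid_def)

lemma Pi2_mult: "Pi2_class u \<otimes>\<^bsub>Pi2\<^esub> Pi2_class v = Pi2_class (u @ v)"
  by (simp add: Pi2_def pres_monoid_mult_class)

section \<open>Invertible reduced words\<close>

lemma strip_relator_append_above:
  assumes "length p \<le> length (strip_relator (p @ t @ [x]))"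
  shows "strip_relator (p @ t @ [x]) = p @ strip_relator (t @ [x])"
proof (cases "\<exists>q i. i \<ge> 1 \<and> t @ [x] = q @ relator i")
  case True
  then obtain q i where "i \<ge> 1" "t @ [x] = q @ relator i" by blast
  then show ?thesis using strip_relator_relator[of i q] strip_relator_relator[of i "p @ q"] by simp
next
  case no_relator: False
  have "\<not> (\<exists>q i. i \<ge> 1 \<and> p @ t @ [x] = q @ relator i)"
  proof clarify
    fix q i assume i: "i \<ge> 1" and eq: "p @ t @ [x] = q @ relator i"
    then have "length p \<le> length q" using assms strip_relator_relator by simp
    then obtain q' where "q = p @ q'"
      using eq by (metis append_eq_append_conv_if append_take_drop_id)
    with eq i no_relator show False by auto
  qed
  with no_relator show ?thesis by (simp add: strip_relator_id)
qed

lemma foldl_nf_step_above: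
  assumes "\<forall>j \<le> length w. length p \<le> length (foldl nf_step (p @ r) (take j w))"
  shows "foldl nf_step (p @ r) w = p @ foldl nf_step r w"
  using assms
proof (induction w rule: rev_induct)
  case (snoc x w)
  have "\<forall>j \<le> length w. length p \<le> length (foldl nf_step (p @ r) (take j w))"
  proof (intro allI impI)
    fix j assume "j \<le> length w"
    with snoc.prems[rule_format, of j] show "length p \<le> length (foldl nf_step (p @ r) (take j w))"
      by simp
  qed
  then have IH: "foldl nf_step (p @ r) w = p @ foldl nf_step r w" by (rule snoc.IH)
  have "length p \<le> length (strip_relator (p @ foldl nf_step r w @ [x]))"
    using snoc.prems[rule_format, of "Suc (length w)"] IH by (simp add: nf_step_def)
  then have "nf_step (p @ foldl nf_step r w) x = p @ nf_step (foldl nf_step r w) x"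
    unfolding nf_step_def using strip_relator_append_above by simp
  with IH show ?case by simp
qed simp

lemma nf_append_above:
  assumes z: "reduced z" and k: "k \<le> length z"
    and above: "\<forall>j \<le> length w. k \<le> length (nf (z @ take j w))"
  shows "nf (z @ w) = take k z @ nf (drop k z @ w)"
proof -
  have z_split: "z = take k z @ drop k z" by simp
  have "reduced (drop k z)" using z z_split reduced_appendD by metis
  moreover have "foldl nf_step (take k z @ drop k z) w = take k z @ foldl nf_step (drop k z) w"
    using above k by (intro foldl_nf_step_above) (simp add: nf_reduced_append[OF z])
  ultimately show ?thesis
    using z by (simp add: nf_reduced_append)
qed

inductive relator_prefixes :: "gen list \<Rightarrow> bool" where
  Nil: "relator_prefixes []"
| snoc: "relator_prefixes z \<Longrightarrow> p \<noteq> [] \<Longrightarrow> r \<noteq> [] \<Longrightarrow> i \<ge> 1 \<Longrightarrow> p @ r = relator i \<Longrightarrow>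
    relator_prefixes (z @ p)"

text \<open>Take the first moment at which reading \<open>y\<close> cuts into \<open>z\<close>: up to then \<open>z\<close> is untouched,
  and the cut removes a relator whose proper prefix is a suffix of \<open>z\<close>.\<close>

lemma right_inverse_cut:
  assumes z: "reduced z" "z \<noteq> []" and zy: "nf (z @ y) = []"
  obtains q p r i y' where "z = q @ p" "p \<noteq> []" "r \<noteq> []" "i \<ge> 1" "p @ r = relator i"
    "nf (q @ y') = []"
proof -
  define H where "H j = length (nf (z @ take j y))" for j
  have "H (length y) < length z" using zy z(2) by (simp add: H_def)
  then obtain j where j: "H j < length z" and least: "\<And>k. k < j \<Longrightarrow> length z \<le> H k"
    using exists_least_iff[of "\<lambda>j. H j < length z"] by (meson not_le)
  have "j \<le> length y" using least[of "length y"] \<open>H (length y) < length z\<close> by linarith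
  moreover have "j \<noteq> 0"
  proof
    assume "j = 0"
    with j nf_reduced[OF z(1)] show False by (simp add: H_def)
  qed
  ultimately obtain j' where j': "j = Suc j'" "j' < length y" by (cases j) auto
  define x where "x = y ! j'"
  have take_j: "take j y = take j' y @ [x]" using j' by (simp add: x_def take_Suc_conv_app_nth)
  have "nf (z @ take j' y) = z @ nf (take j' y)"
    using nf_append_above[OF z(1) order_refl, of "take j' y"] least j' by (simp add: H_def)
  then have cut: "nf (z @ take j y) = strip_relator (z @ nf (take j' y) @ [x])"
    using take_j nf_snoc[of "z @ take j' y" x] by simp
  then have "strip_relator (z @ nf (take j' y) @ [x]) \<noteq> z @ nf (take j' y) @ [x]"
    using j by (auto simp: H_def)
  then obtain q i where i: "i \<ge> 1" and q: "z @ nf (take j' y) @ [x] = q @ relator i"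
    using strip_relator_id by blast
  then have "length q < length z" using j cut by (simp add: H_def strip_relator_relator)
  then obtain p where zq: "z = q @ p" and pr: "p @ nf (take j' y) @ [x] = relator i"
    using q by (metis append_eq_append_conv_if append_take_drop_id order.strict_implies_order)
  have "nf (q @ drop j y) = nf (nf (z @ take j y) @ drop j y)"
    using cut i q by (simp add: strip_relator_relator)
  also have "\<dots> = []" using zy by (simp add: nf_nf_append)
  finally show ?thesis
    using that[OF zq _ _ i pr] zq \<open>length q < length z\<close> by simp
qed

lemma right_invertible_relator_prefixes:
  "reduced z \<Longrightarrow> nf (z @ y) = [] \<Longrightarrow> relator_prefixes z"
proof (induction "length z" arbitrary: z y rule: less_induct)
  case less
  show ?case
  proof (cases "z = []")
    case False
    with less.prems obtain q p r i y' where cut: "z = q @ p" "p \<noteq> []" "r \<noteq> []" "i \<ge> 1"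
      "p @ r = relator i" "nf (q @ y') = []"
      by (blast elim: right_inverse_cut)
    have "reduced q" using less.prems(1) cut(1) reduced_appendD by blast
    moreover have "length q < length z" using cut(1,2) by simp
    ultimately have "relator_prefixes q" using less.hyps cut(6) by blast
    with cut show ?thesis by (simp add: relator_prefixes.snoc)
  qed (simp add: relator_prefixes.Nil)
qed

fun mirror_gen :: "gen \<Rightarrow> gen" where
  "mirror_gen a = c"
| "mirror_gen b = b"
| "mirror_gen c = a"

text \<open>An anti-automorphism of \<open>\<Pi>\<^sub>2\<close>; it turns left inverses into right inverses.\<close>

definition mirror :: "gen list \<Rightarrow> gen list" where
  "mirror w = rev (map mirror_gen w)"

lemma mirror_gen_mirror_gen [simp]: "mirror_gen (mirror_gen x) = x"
  by (cases x) simp_all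

lemma mirror_mirror [simp]: "mirror (mirror w) = w"
  by (simp add: mirror_def rev_map comp_def)

lemma mirror_append [simp]: "mirror (u @ v) = mirror v @ mirror u"
  by (simp add: mirror_def)

lemma mirror_Nil [simp]: "mirror [] = []"
  by (simp add: mirror_def)

lemma mirror_relator [simp]: "mirror (relator i) = relator i"
  by (simp add: mirror_def relator_def piece_def)

lemma Pi2_eq_mirror: "Pi2_eq u v \<Longrightarrow> Pi2_eq (mirror u) (mirror v)"
proof (induction rule: pres_eq.induct)
  case (rel l r x y)
  then obtain i where "l = relator i" "r = []" "i \<ge> 1" by (auto simp: Pi2_rels_relator)
  then show ?case using Pi2_eq_relator[of i "mirror y" "mirror x"] by simp
qed (auto intro: pres_eq.intros)

lemma reduced_mirror: "reduced s \<Longrightarrow> reduced (mirror s)"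
  unfolding reduced_def by (metis mirror_mirror mirror_append mirror_relator append.assoc)

lemma nf_mirror: "nf (mirror w) = mirror (nf w)"
proof -
  have "nf (mirror w) = nf (mirror (nf w))"
    using Pi2_eq_mirror[OF Pi2_eq_nf] Pi2_eq_iff_nf by blast
  also have "\<dots> = mirror (nf w)" by (simp add: nf_reduced reduced_mirror reduced_nf)
  finally show ?thesis .
qed

definition pieces :: "nat list \<Rightarrow> gen list" where
  "pieces ks = concat (map piece ks)"

lemma pieces_Nil [simp]: "pieces [] = []"
  by (simp add: pieces_def)

lemma pieces_Cons [simp]: "pieces (k # ks) = piece k @ pieces ks"
  by (simp add: pieces_def)

lemma pieces_append [simp]: "pieces (ks @ ms) = pieces ks @ pieces ms"
  by (simp add: pieces_def)

lemma foldl_nf_step_pieces: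
  "\<exists>ms. foldl nf_step (pieces ks) (pieces js) = pieces ms \<and> set ms \<subseteq> set ks \<union> set js"
proof (induction js arbitrary: ks)
  case Nil
  show ?case by (intro exI[of _ ks]) simp
next
  case (Cons j js)
  have "\<exists>ms. strip_relator (pieces ks @ piece j) = pieces ms \<and> set ms \<subseteq> set ks \<union> {j}"
  proof (cases "\<exists>q k. k \<ge> 1 \<and> pieces ks @ piece j = q @ relator k")
    case True
    then obtain q k where k: "k \<ge> 1" "pieces ks @ piece j = (q @ piece k) @ piece k"
      by (auto simp: relator_def)
    then have "k = j" and ks: "pieces ks = q @ piece j" using piece_suffix_unique by blast+
    then obtain ks' m where ks': "ks = ks' @ [m]" by (cases ks rule: rev_cases) auto
    with ks have "pieces ks' @ piece m = q @ piece j" by simp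
    then have "q = pieces ks'" using piece_suffix_unique by blast
    moreover have "strip_relator (pieces ks @ piece j) = q"
      using k \<open>k = j\<close> strip_relator_relator[of j q] by (simp add: relator_def)
    ultimately show ?thesis using ks' by (intro exI[of _ ks']) auto
  next
    case False
    have "strip_relator (pieces ks @ piece j) = pieces (ks @ [j])"
      using strip_relator_id[OF False] by simp
    then show ?thesis by (intro exI[of _ "ks @ [j]"]) simp
  qed
  then obtain ms where ms: "foldl nf_step (pieces ks) (piece j) = pieces ms"
    "set ms \<subseteq> set ks \<union> {j}"
    by (auto simp: foldl_nf_step_piece)
  obtain ns where "foldl nf_step (pieces ms) (pieces js) = pieces ns" "set ns \<subseteq> set ms \<union> set js"
    using Cons.IH by blast
  with ms show ?case by (intro exI[of _ ns]) auto
qed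

lemma nf_pieces: "\<exists>ms. nf (pieces ks) = pieces ms \<and> set ms \<subseteq> set ks"
  using foldl_nf_step_pieces[of "[]" ks] by (simp add: nf_def)

lemma reduced_piece: "reduced (piece n)"
  unfolding reduced_def
proof clarify
  have count: "length (filter (\<lambda>x. x = c) (piece k)) = 1" for k
    by (simp add: piece_def)
  fix p q i assume "piece n = p @ relator i @ q"
  then have "length (filter (\<lambda>x. x = c) (piece n)) =
      length (filter (\<lambda>x. x = c) (p @ relator i @ q))"
    by simp
  then show False by (simp add: relator_def count)
qed

lemma piece_eq_pieces: "piece n = pieces ks \<Longrightarrow> n \<in> set ks"
proof (cases ks rule: rev_cases)
  case (snoc ks' m)
  moreover assume "piece n = pieces ks"
  ultimately have "[] @ piece n = pieces ks' @ piece m" by simp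
  then have "n = m" using piece_suffix_unique by blast
  with snoc show ?thesis by simp
qed simp

definition piece_adj :: "gen \<Rightarrow> gen \<Rightarrow> bool" where
  "piece_adj x y \<longleftrightarrow> (x, y) \<in> {(a, b), (b, b), (b, c), (c, a)}"

lemma successively_piece_adj_piece: "i \<ge> 1 \<Longrightarrow> successively piece_adj (piece i)"
proof -
  have "successively piece_adj (replicate n b @ [c])" for n
    by (induction n) (auto simp: piece_adj_def successively_Cons hd_append)
  moreover assume "i \<ge> 1"
  ultimately show ?thesis
    by (cases i) (simp_all add: piece_def piece_adj_def successively_Cons hd_append)
qed

lemma successively_piece_adj_relator: "i \<ge> 1 \<Longrightarrow> successively piece_adj (relator i)"
  using successively_piece_adj_piece
  by (simp add: relator_def successively_append_iff) (simp add: piece_def piece_adj_def)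

lemma relator_prefixes_adj:
  "relator_prefixes z \<Longrightarrow>
    (z \<noteq> [] \<longrightarrow> hd z = a) \<and> successively (\<lambda>x y. piece_adj x y \<or> y = a) z"
proof (induction rule: relator_prefixes.induct)
  case (snoc z p r i)
  have "hd (p @ r) = a" using snoc.hyps(5) by (simp add: relator_def piece_def)
  then have "hd p = a" using snoc.hyps(2) by simp
  moreover have "successively piece_adj p"
    using successively_piece_adj_relator[OF snoc.hyps(4)] snoc.hyps(5)
    by (metis successively_append_iff)
  then have "successively (\<lambda>x y. piece_adj x y \<or> y = a) p"
    by (rule successively_mono) simp
  ultimately show ?case
    using snoc.IH snoc.hyps(2) by (auto simp: successively_append_iff hd_append)
qed simp

lemma successively_piece_adj_no_c:
  "successively piece_adj (x # w) \<Longrightarrow> x \<noteq> c \<Longrightarrow> c \<notin> set w \<Longrightarrow> w = replicate (length w) b"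
proof (induction w arbitrary: x)
  case (Cons y w)
  then have "y = b" by (cases x; cases y) (auto simp: piece_adj_def)
  with Cons.prems Cons.IH[of y] show ?case by simp
qed simp

lemma successively_piece_adj_pieces:
  "successively piece_adj z \<Longrightarrow> z \<noteq> [] \<Longrightarrow> hd z = a \<Longrightarrow> last z = c \<Longrightarrow> \<exists>ks. z = pieces ks"
proof (induction "length z" arbitrary: z rule: less_induct)
  case less
  have "c \<in> set z" using less.prems(2,4) by (metis last_in_set)
  then obtain u v where z: "z = u @ c # v" and "c \<notin> set u" by (metis split_list_first)
  moreover have "u \<noteq> []" using z less.prems(3) by auto
  ultimately obtain u' where u: "u = a # u'" and "c \<notin> set u'"
    using less.prems(3) by (cases u) auto
  have "successively piece_adj ((a # u') @ c # v)" using less.prems(1) z u by simp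
  then have "successively piece_adj (a # u')" by (simp only: successively_append_iff)
  then have "u' = replicate (length u') b"
    using successively_piece_adj_no_c[of a u'] \<open>c \<notin> set u'\<close> by simp
  then have z_piece: "z = piece (length u') @ v"
    using z u by (metis piece_def append_Cons append_assoc append_Cons append_Nil)
  show ?case
  proof (cases "v = []")
    case True
    with z_piece show ?thesis by (intro exI[of _ "[length u']"]) simp
  next
    case False
    have "successively piece_adj (piece (length u') @ v)" using less.prems(1) z_piece by simp
    then have "successively piece_adj v" and "piece_adj c (hd v)"
      using False by (simp_all add: successively_append_iff)
    then have "hd v = a" by (cases "hd v") (simp_all add: piece_adj_def)
    moreover have "last v = c" using less.prems(4) z_piece False by simp
    moreover have "length v < length z" using z_piece by (simp add: piece_def)
    ultimately obtain ks where "v = pieces ks"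
      using less.hyps False \<open>successively piece_adj v\<close> by blast
    with z_piece show ?thesis by (intro exI[of _ "length u' # ks"]) simp
  qed
qed

lemma mirror_relator_prefixes_adj:
  assumes "relator_prefixes (mirror p)" and "p \<noteq> []"
  shows "last p = c" and "successively (\<lambda>x y. piece_adj x y \<or> x = c) p"
proof -
  have "mirror p \<noteq> []" using assms(2) by (simp add: mirror_def)
  then have "hd (mirror p) = a" "successively (\<lambda>x y. piece_adj x y \<or> y = a) (mirror p)"
    using assms(1) relator_prefixes_adj by blast+
  moreover have "(\<lambda>x y. piece_adj (mirror_gen y) (mirror_gen x) \<or> mirror_gen x = a) =
      (\<lambda>x y. piece_adj x y \<or> x = c)"
    by (intro ext, rename_tac x y, case_tac x; case_tac y) (simp_all add: piece_adj_def)
  ultimately show "last p = c" "successively (\<lambda>x y. piece_adj x y \<or> x = c) p"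
    using assms(2) by (simp_all add: mirror_def hd_rev last_map successively_map)
      (metis mirror_gen_mirror_gen mirror_gen.simps(1), metis)
qed

text \<open>A right inverse forbids the factors \<open>c b\<close>, \<open>a c\<close>, \<open>c c\<close>, a left inverse forbids \<open>b a\<close>,
  \<open>a c\<close>, \<open>a a\<close>; what remains are the products of pieces.\<close>

theorem invertible_reduced_pieces:
  assumes p: "reduced p" and pq: "nf (p @ q) = []" and qp: "nf (q @ p) = []"
  shows "\<exists>ks. p = pieces ks"
proof (cases "p = []")
  case False
  have "relator_prefixes p"
    using right_invertible_relator_prefixes[OF p pq] .
  then have right: "hd p = a" "successively (\<lambda>x y. piece_adj x y \<or> y = a) p"
    using False relator_prefixes_adj by blast+
  have "nf (mirror p @ mirror q) = []"
    using nf_mirror[of "q @ p"] qp by simp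
  then have "relator_prefixes (mirror p)"
    using right_invertible_relator_prefixes[OF reduced_mirror[OF p]] by blast
  note left = mirror_relator_prefixes_adj[OF this False]
  have "successively piece_adj p"
    using right(2) left(2)
    by (induction p rule: induct_list012) (auto simp: piece_adj_def)
  then show ?thesis using successively_piece_adj_pieces False right(1) left(1) by blast
qed (intro exI[of _ "[]"], simp)

section \<open>Idempotents and maximal subgroups\<close>

text \<open>While \<open>z\<close> is read into \<open>z\<close>, let the normal form reach its minimal length \<open>k\<close> after
  \<open>j\<^sub>0\<close> letters. The first \<open>k\<close> letters of \<open>z\<close> are never touched, so the rest of \<open>z\<close> cancels
  \<open>take j\<^sub>0 z\<close> and is then restored from \<open>drop j\<^sub>0 z\<close>, which forces \<open>j\<^sub>0 = k\<close>.\<close>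

lemma reduced_idempotent_split:
  assumes z: "reduced z" and idem: "nf (z @ z) = z"
  obtains x y where "z = x @ y" "nf (y @ x) = []"
proof -
  define H where "H j = length (nf (z @ take j z))" for j
  obtain j0 where j0: "j0 \<le> length z" and min: "\<And>j. j \<le> length z \<Longrightarrow> H j0 \<le> H j"
    using ex_has_least_nat[of "\<lambda>j. j \<le> length z" 0 H] by auto
  define k where "k = H j0"
  have k: "k \<le> length z" using min[of "length z"] idem by (simp add: H_def k_def)
  have above: "\<forall>j \<le> length (take j1 z). k \<le> length (nf (z @ take j (take j1 z)))" for j1
    using min unfolding H_def k_def by (simp add: min_def)
  have "nf (z @ take j0 z) = take k z @ nf (drop k z @ take j0 z)"
    by (rule nf_append_above[OF z k above])
  moreover have "length (nf (z @ take j0 z)) = k" by (simp add: H_def k_def)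
  ultimately have "length (take k z) + length (nf (drop k z @ take j0 z)) = k"
    by (metis length_append)
  then have yx: "nf (drop k z @ take j0 z) = []"
    using k by simp
  have "z = take k z @ nf (drop k z @ z)"
    using nf_append_above[OF z k above[of "length z"]] idem by simp
  then have "drop k z = nf (drop k z @ z)"
    by (metis append_eq_conv_conj append_take_drop_id)
  also have "\<dots> = nf (nf (drop k z @ take j0 z) @ drop j0 z)"
    by (simp add: nf_nf_append)
  also have "\<dots> = drop j0 z"
    using yx z reduced_appendD[of "take j0 z"] by (simp add: nf_reduced)
  finally have "length (drop k z) = length (drop j0 z)" by simp
  then have "j0 = k" using j0 k by simp
  with yx show ?thesis by (intro that[of "take k z" "drop k z"]) simp_all
qed

lemma monoid_Pi2: "monoid Pi2"
  unfolding Pi2_def by (rule monoid_pres_monoid)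

locale idempotent_split =
  fixes X Y :: "gen list"
  assumes YX: "nf (Y @ X) = []"
begin

definition idem :: "gen list set" where
  "idem = Pi2_class (X @ Y)"

abbreviation eMe :: "gen list set monoid" where
  "eMe \<equiv> local_monoid Pi2 idem"

lemma nf_cancel: "nf (p @ Y @ X @ q) = nf (p @ q)"
  using nf_append_Nil[OF YX, of p q] by simp

lemma idempotent: "idempotent_of Pi2 idem"
  using nf_cancel[of X Y]
  by (simp add: idempotent_of_def idem_def Pi2_carrier Pi2_mult Pi2_class_eq_iff)

lemma group_units: "group (units_of eMe)"
  using monoid.units_group[OF monoid_local_monoid[OF monoid_Pi2 idempotent]] .

lemma eMe_carrier: "g \<in> carrier eMe \<longleftrightarrow> (\<exists>u. g = Pi2_class (X @ Y @ u @ X @ Y))"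
proof
  assume "g \<in> carrier eMe"
  then show "\<exists>u. g = Pi2_class (X @ Y @ u @ X @ Y)"
    by (auto simp: local_monoid_def Pi2_carrier idem_def Pi2_mult)
next
  assume "\<exists>u. g = Pi2_class (X @ Y @ u @ X @ Y)"
  then obtain u where "g = idem \<otimes>\<^bsub>Pi2\<^esub> Pi2_class u \<otimes>\<^bsub>Pi2\<^esub> idem"
    by (auto simp: idem_def Pi2_mult)
  then show "g \<in> carrier eMe"
    by (auto simp: local_monoid_def Pi2_carrier)
qed

lemma eMe_mult: "g \<otimes>\<^bsub>eMe\<^esub> h = g \<otimes>\<^bsub>Pi2\<^esub> h"
  by (simp add: local_monoid_def)

lemma eMe_one: "\<one>\<^bsub>eMe\<^esub> = idem"
  by (simp add: local_monoid_def)

lemma eMe_absorb: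
  assumes "Pi2_class w \<in> carrier eMe"
  shows "nf (X @ Y @ w) = nf w" and "nf (w @ X @ Y) = nf w"
proof -
  obtain u where "nf w = nf (X @ Y @ u @ X @ Y)"
    using assms by (auto simp: eMe_carrier Pi2_class_eq_iff)
  moreover have "nf (X @ Y @ X @ Y @ u @ X @ Y) = nf (X @ Y @ u @ X @ Y)"
    "nf (X @ Y @ u @ X @ Y @ X @ Y) = nf (X @ Y @ u @ X @ Y)"
    using nf_cancel[of X "Y @ u @ X @ Y"] nf_cancel[of "X @ Y @ u @ X" Y] by simp_all
  ultimately show "nf (X @ Y @ w) = nf w" "nf (w @ X @ Y) = nf w"
    using nf_context[of w "X @ Y @ u @ X @ Y" "X @ Y" "[]"]
      nf_context[of w "X @ Y @ u @ X @ Y" "[]" "X @ Y"] by simp_all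
qed

text \<open>Conjugation \<open>w \<mapsto> Y w X\<close> is multiplicative on \<open>eMe\<close>, because \<open>X Y\<close> acts as the identity there.\<close>

lemma nf_conj_mult:
  assumes "Pi2_class w \<in> carrier eMe"
  shows "nf (Y @ (w @ v) @ X) = nf (nf (Y @ w @ X) @ nf (Y @ v @ X))"
proof -
  have "nf (Y @ w @ v @ X) = nf (Y @ w @ X @ Y @ v @ X)"
    using nf_context[OF eMe_absorb(2)[OF assms, symmetric], of Y "v @ X"] by simp
  then show ?thesis by (simp add: nf_nf_append nf_append_nf)
qed

lemma unit_conj_pieces:
  assumes g: "Pi2_class w \<in> Units eMe"
  shows "\<exists>ks. nf (Y @ w @ X) = pieces ks"
proof -
  obtain h where h: "h \<in> carrier eMe"
    and "h \<otimes>\<^bsub>Pi2\<^esub> Pi2_class w = idem" "Pi2_class w \<otimes>\<^bsub>Pi2\<^esub> h = idem"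
    using g by (auto simp: Units_def eMe_mult eMe_one)
  moreover obtain v where "h = Pi2_class v" using h eMe_carrier by blast
  ultimately have v: "Pi2_class v \<in> carrier eMe"
    and vw: "Pi2_class v \<otimes>\<^bsub>Pi2\<^esub> Pi2_class w = idem"
    and wv: "Pi2_class w \<otimes>\<^bsub>Pi2\<^esub> Pi2_class v = idem"
    by simp_all
  have w: "Pi2_class w \<in> carrier eMe" using g by (simp add: Units_def)
  have YX_XY: "nf (Y @ X @ Y @ X) = []" using nf_cancel[of "[]" "Y @ X"] YX by simp
  have "nf (nf (Y @ w @ X) @ nf (Y @ v @ X)) = []"
  proof -
    have "nf (w @ v) = nf (X @ Y)" using wv by (simp add: idem_def Pi2_mult Pi2_class_eq_iff)
    then show ?thesis
      using nf_conj_mult[OF w, of v] nf_context[of "w @ v" "X @ Y" Y X] YX_XY by simp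
  qed
  moreover have "nf (nf (Y @ v @ X) @ nf (Y @ w @ X)) = []"
  proof -
    have "nf (v @ w) = nf (X @ Y)" using vw by (simp add: idem_def Pi2_mult Pi2_class_eq_iff)
    then show ?thesis
      using nf_conj_mult[OF v, of w] nf_context[of "v @ w" "X @ Y" Y X] YX_XY by simp
  qed
  ultimately show ?thesis
    using invertible_reduced_pieces[OF reduced_nf] by (metis nf_nf_append nf_append_nf)
qed

definition piece_bounded :: "nat \<Rightarrow> gen list set \<Rightarrow> bool" where
  "piece_bounded N g \<longleftrightarrow>
     (\<forall>w. g = Pi2_class w \<longrightarrow> (\<exists>ks. nf (Y @ w @ X) = pieces ks \<and> set ks \<subseteq> {..N}))"

lemma piece_bounded_mono:
  assumes "piece_bounded N g" and "N \<le> M" shows "piece_bounded M g"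
  unfolding piece_bounded_def
proof (intro allI impI)
  fix w assume "g = Pi2_class w"
  with assms(1) obtain ks where "nf (Y @ w @ X) = pieces ks" "set ks \<subseteq> {..N}"
    unfolding piece_bounded_def by blast
  with assms(2) show "\<exists>ks. nf (Y @ w @ X) = pieces ks \<and> set ks \<subseteq> {..M}"
    by (intro exI[of _ ks]) auto
qed

lemma nf_conj_class: "Pi2_class w = Pi2_class w' \<Longrightarrow> nf (Y @ w @ X) = nf (Y @ w' @ X)"
  unfolding Pi2_class_eq_iff by (rule nf_context)

lemma unit_piece_bounded:
  assumes g: "g \<in> Units eMe" shows "\<exists>N. piece_bounded N g"
proof -
  have "g \<in> carrier eMe" using g by (simp add: Units_def)
  then obtain w where w: "g = Pi2_class w"
    unfolding eMe_carrier by blast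
  then obtain ks where ks: "nf (Y @ w @ X) = pieces ks"
    using unit_conj_pieces g by blast
  obtain N where "set ks \<subseteq> {..N}"
    using finite_nat_set_iff_bounded_le[of "set ks"] by auto
  then have "piece_bounded N g"
    unfolding piece_bounded_def using ks w nf_conj_class by metis
  then show ?thesis ..
qed

lemma finite_piece_bounded:
  "finite S \<Longrightarrow> S \<subseteq> Units eMe \<Longrightarrow> \<exists>N. \<forall>g\<in>S. piece_bounded N g"
proof (induction S rule: finite_induct)
  case (insert g S)
  obtain N where N: "\<forall>h\<in>S. piece_bounded N h" using insert.IH insert.prems by blast
  obtain M where M: "piece_bounded M g" using unit_piece_bounded insert.prems by blast
  have "piece_bounded (max N M) h" if "h \<in> insert g S" for h
    using that N M piece_bounded_mono by (metis insertE max.cobounded1 max.cobounded2)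
  then show ?case by blast
qed simp

lemma piece_bounded_idem: "piece_bounded N idem"
  unfolding piece_bounded_def
proof (intro allI impI)
  fix w assume "idem = Pi2_class w"
  then have "nf (Y @ w @ X) = nf (Y @ (X @ Y) @ X)"
    using nf_conj_class[of w "X @ Y"] by (simp add: idem_def)
  also have "\<dots> = []" using nf_cancel[of "[]" "Y @ X"] YX by simp
  finally show "\<exists>ks. nf (Y @ w @ X) = pieces ks \<and> set ks \<subseteq> {..N}"
    by (intro exI[of _ "[]"]) simp
qed

lemma piece_bounded_mult:
  assumes g: "g \<in> carrier eMe" and h: "h \<in> carrier eMe"
    and bounded: "piece_bounded N g" "piece_bounded N h"
  shows "piece_bounded N (g \<otimes>\<^bsub>Pi2\<^esub> h)"
  unfolding piece_bounded_def
proof (intro allI impI)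
  fix w assume gh: "g \<otimes>\<^bsub>Pi2\<^esub> h = Pi2_class w"
  obtain u where u: "g = Pi2_class u" using g unfolding eMe_carrier by blast
  obtain v where v: "h = Pi2_class v" using h unfolding eMe_carrier by blast
  obtain ks where ks: "nf (Y @ u @ X) = pieces ks" "set ks \<subseteq> {..N}"
    using bounded(1) u unfolding piece_bounded_def by blast
  obtain ms where ms: "nf (Y @ v @ X) = pieces ms" "set ms \<subseteq> {..N}"
    using bounded(2) v unfolding piece_bounded_def by blast
  obtain ns where ns: "nf (pieces (ks @ ms)) = pieces ns" "set ns \<subseteq> set (ks @ ms)"
    using nf_pieces by blast
  have "Pi2_class w = Pi2_class (u @ v)" using gh u v by (simp add: Pi2_mult)
  then have "nf (Y @ w @ X) = nf (Y @ (u @ v) @ X)" by (rule nf_conj_class)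
  also have "\<dots> = nf (pieces ks @ pieces ms)"
    using nf_conj_mult[of u v] g u ks ms by simp
  also have "\<dots> = pieces ns" using ns by simp
  finally show "\<exists>ks. nf (Y @ w @ X) = pieces ks \<and> set ks \<subseteq> {..N}"
    using ns ks ms by (intro exI[of _ ns]) auto
qed

lemma unbounded_unit:
  fixes N :: nat
  defines "g \<equiv> Pi2_class (X @ piece (Suc N) @ Y)"
  shows "g \<in> Units eMe" and "\<not> piece_bounded N g"
proof -
  let ?p = "piece (Suc N)"
  have "nf (X @ Y @ (X @ ?p @ Y) @ X @ Y) = nf (X @ ?p @ Y)"
    using nf_cancel[of X "?p @ Y @ X @ Y"] nf_cancel[of "X @ ?p" Y] by simp
  then have g_in: "g \<in> carrier eMe"
    unfolding g_def eMe_carrier Pi2_class_eq_iff by metis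
  have "nf (X @ ?p @ Y @ X @ ?p @ Y) = nf (X @ [] @ Y)"
    using nf_cancel[of "X @ ?p" "?p @ Y"] nf_relator[of "Suc N" X Y] by (simp add: relator_def)
  then have "g \<otimes>\<^bsub>eMe\<^esub> g = \<one>\<^bsub>eMe\<^esub>"
    unfolding eMe_mult eMe_one by (simp add: g_def idem_def Pi2_mult Pi2_class_eq_iff)
  with g_in show "g \<in> Units eMe" by (auto simp: Units_def)
  have "nf (Y @ (X @ ?p @ Y) @ X) = ?p"
    using nf_cancel[of "[]" "?p @ Y @ X"] nf_cancel[of ?p "[]"] nf_reduced[OF reduced_piece] by simp
  then show "\<not> piece_bounded N g"
    unfolding piece_bounded_def g_def using piece_eq_pieces by fastforce
qed

theorem units_not_finitely_generated: "\<not> finitely_generated_group (units_of eMe)"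
proof
  interpret G: group "units_of eMe" by (rule group_units)
  assume "finitely_generated_group (units_of eMe)"
  then obtain S where S: "finite S" "S \<subseteq> Units eMe" "generate (units_of eMe) S = Units eMe"
    unfolding finitely_generated_group_def units_of_carrier by blast
  define S' where "S' = S \<union> m_inv (units_of eMe) ` S"
  have "S' \<subseteq> Units eMe"
    using S(2) G.inv_closed unfolding S'_def units_of_carrier by blast
  moreover have "finite S'" using S(1) by (simp add: S'_def)
  ultimately obtain N where N: "\<forall>g\<in>S'. piece_bounded N g"
    using finite_piece_bounded by blast
  have "piece_bounded N g" if "g \<in> generate (units_of eMe) S" for g
    using that
  proof (induction rule: generate.induct)
    case one
    show ?case unfolding units_of_one eMe_one by (rule piece_bounded_idem)
  next
    case (incl h)
    then show ?case using N by (simp add: S'_def)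
  next
    case (inv h)
    then show ?case using N by (simp add: S'_def)
  next
    case (eng g h)
    have "generate (units_of eMe) S \<subseteq> carrier eMe"
      using S(3) by (simp add: Units_def)
    with eng have "piece_bounded N (g \<otimes>\<^bsub>Pi2\<^esub> h)"
      by (intro piece_bounded_mult) auto
    then show ?case by (simp add: units_of_mult eMe_mult)
  qed
  then show False
    using unbounded_unit[of N] S(3) by blast
qed

end

lemma idempotent_split_exists:
  assumes "idempotent_of Pi2 e"
  obtains X Y where "idempotent_split X Y" and "e = idempotent_split.idem X Y"
proof -
  obtain w where w: "e = Pi2_class w" and "e \<otimes>\<^bsub>Pi2\<^esub> e = e"
    using assms by (auto simp: idempotent_of_def Pi2_carrier)
  then have "nf (nf w @ nf w) = nf w"
    by (simp add: Pi2_mult Pi2_class_eq_iff nf_nf_append nf_append_nf)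
  then obtain X Y where XY: "nf w = X @ Y" "nf (Y @ X) = []"
    using reduced_idempotent_split[OF reduced_nf] by metis
  then interpret idempotent_split X Y by unfold_locales
  have "e = idem"
    using w XY(1) nf_reduced[OF reduced_nf, of w] by (simp add: idem_def Pi2_class_eq_iff)
  then show ?thesis using that idempotent_split_axioms by blast
qed

theorem Pi2_maximal_subgroups_not_finitely_generated:
  "idempotent_of Pi2 e \<Longrightarrow> \<not> finitely_generated_group (maximal_subgroup Pi2 e)"
  by (metis idempotent_split_exists idempotent_split.units_not_finitely_generated
      maximal_subgroup_def)

section \<open>A context-free grammar for the word problem\<close>

definition core :: "nat \<Rightarrow> gen list" where
  "core j = replicate j b @ c # a # replicate j b"

lemma core_Suc: "core (Suc j) = [b] @ core j @ [b]"
  by (simp add: core_def replicate_append_same[symmetric])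

lemma relator_Suc: "relator (Suc j) = a # b # core j @ [b, c]"
  by (simp add: relator_def piece_def core_def replicate_append_same)

text \<open>Derivations of words equal to \<open>1\<close> (\<open>trivial_word\<close>) and to some \<open>b\<^sup>j c a b\<^sup>j\<close> (\<open>core_word\<close>),
  following the nesting of the relators.\<close>

inductive trivial_word and core_word :: "gen list \<Rightarrow> bool" where
  trivial_Nil: "trivial_word []"
| trivial_append: "trivial_word u \<Longrightarrow> trivial_word v \<Longrightarrow> trivial_word (u @ v)"
| trivial_relator: "trivial_word d1 \<Longrightarrow> core_word k \<Longrightarrow> trivial_word d2 \<Longrightarrow>
    trivial_word (a # d1 @ b # k @ b # d2 @ [c])"
| core_b: "trivial_word d1 \<Longrightarrow> core_word k \<Longrightarrow> trivial_word d2 \<Longrightarrow> core_word (d1 @ b # k @ b # d2)"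
| core_c: "trivial_word d1 \<Longrightarrow> trivial_word d2 \<Longrightarrow> trivial_word d3 \<Longrightarrow>
    core_word (d1 @ c # d2 @ a # d3)"

inductive padded :: "gen list \<Rightarrow> gen list \<Rightarrow> bool" where
  Nil: "padded [] []"
| Cons: "trivial_word d \<Longrightarrow> padded r u \<Longrightarrow> padded (x # r) (d @ x # u)"

lemma padded_appendE:
  assumes "padded (r1 @ r2) u"
  obtains u1 u2 where "u = u1 @ u2" "padded r1 u1" "padded r2 u2"
  using assms
proof (induction r1 arbitrary: u thesis)
  case Nil
  then show ?case using padded.Nil by fastforce
next
  case (Cons x r1)
  from Cons.prems(2) obtain d u' where "trivial_word d" "padded (r1 @ r2) u'" "u = d @ x # u'"
    by (cases rule: padded.cases) auto
  moreover obtain u1 u2 where "u' = u1 @ u2" "padded r1 u1" "padded r2 u2"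
    using Cons.IH calculation(2) by blast
  ultimately show ?case using Cons.prems(1)[of "d @ x # u1" u2] padded.Cons by simp
qed

lemma padded_append: "padded r1 u1 \<Longrightarrow> padded r2 u2 \<Longrightarrow> padded (r1 @ r2) (u1 @ u2)"
  by (induction rule: padded.induct) (auto intro: padded.Cons)

lemma padded_single_iff: "padded [x] u \<longleftrightarrow> (\<exists>d. trivial_word d \<and> u = d @ [x])"
  by (auto elim: padded.cases intro: padded.intros)

lemma padded_core_word: "padded (core j) u \<Longrightarrow> trivial_word d \<Longrightarrow> core_word (u @ d)"
proof (induction j arbitrary: u d)
  case 0
  then have "padded ([c] @ [a]) u" by (simp add: core_def)
  then obtain d1 d2 where "trivial_word d1" "trivial_word d2" "u = (d1 @ [c]) @ (d2 @ [a])"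
    by (metis padded_appendE padded_single_iff)
  with 0 show ?case using core_c[of d1 d2 d] by simp
next
  case (Suc j)
  then have "padded ([b] @ core j @ [b]) u" by (simp add: core_Suc)
  then obtain u1 u2 u3 where "u = u1 @ u2 @ u3" "padded [b] u1" "padded (core j) u2" "padded [b] u3"
    by (metis padded_appendE)
  moreover obtain d1 d2 where "trivial_word d1" "u1 = d1 @ [b]" "trivial_word d2" "u3 = d2 @ [b]"
    using calculation padded_single_iff by metis
  ultimately show ?case using Suc core_b[of d1 "u2 @ d2" d] by simp
qed

lemma padded_relator_trivial:
  assumes "padded (a # b # core j @ [b]) u" and "trivial_word d"
  shows "trivial_word (u @ d @ [c])"
proof -
  from assms(1) have "padded ([a] @ [b] @ core j @ [b]) u" by simp
  then obtain u0 u1 u2 u3 where "u = u0 @ u1 @ u2 @ u3" "padded [a] u0" "padded [b] u1"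
    "padded (core j) u2" "padded [b] u3"
    by (metis padded_appendE)
  moreover obtain d0 d1 d2 where "trivial_word d0" "u0 = d0 @ [a]" "trivial_word d1" "u1 = d1 @ [b]"
    "trivial_word d2" "u3 = d2 @ [b]"
    using calculation padded_single_iff by metis
  moreover have "core_word (u2 @ d2)" using padded_core_word calculation by blast
  ultimately show ?thesis
    using trivial_append[OF \<open>trivial_word d0\<close> trivial_relator[of d1 "u2 @ d2" d]] assms(2) by simp
qed

lemma padded_nf: "\<exists>u' d. padded (nf u) u' \<and> trivial_word d \<and> u = u' @ d"
proof (induction u rule: rev_induct)
  case Nil
  then show ?case using padded.Nil trivial_Nil by auto
next
  case (snoc x u)
  then obtain u' d where IH: "padded (nf u) u'" "trivial_word d" "u = u' @ d" by blast
  show ?case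
  proof (cases "\<exists>q i. i \<ge> 1 \<and> nf u @ [x] = q @ relator i")
    case True
    then obtain q i where "i \<ge> 1" "nf u @ [x] = q @ relator i" by blast
    moreover from this obtain j where "i = Suc j" by (cases i) auto
    ultimately have "nf u @ [x] = q @ relator (Suc j)" by simp
    then have nf_ux: "nf (u @ [x]) = q" and x: "x = c" and nf_u: "nf u = q @ a # b # core j @ [b]"
      using strip_relator_relator[of "Suc j" q] by (simp_all add: nf_snoc relator_Suc)
    obtain u1 u2 where "u' = u1 @ u2" "padded q u1" "padded (a # b # core j @ [b]) u2"
      using IH(1) nf_u padded_appendE by metis
    moreover have "trivial_word (u2 @ d @ [c])"
      using padded_relator_trivial calculation(3) IH(2) by blast
    ultimately show ?thesis using nf_ux IH x by (intro exI[of _ u1] exI[of _ "u2 @ d @ [c]"]) simp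
  next
    case False
    then have "nf (u @ [x]) = nf u @ [x]" by (simp add: nf_snoc strip_relator_id)
    moreover have "padded (nf u @ [x]) (u' @ d @ [x])"
      using padded_append[OF IH(1)] padded_single_iff IH(2) by fastforce
    ultimately show ?thesis
      using IH trivial_Nil by (intro exI[of _ "u' @ d @ [x]"] exI[of _ "[]"]) simp
  qed
qed

abbreviation letter :: "gen \<Rightarrow> nat + gen wp_sym" where
  "letter x \<equiv> Inr (Letter x)"

abbreviation letters :: "gen list \<Rightarrow> (nat + gen wp_sym) list" where
  "letters w \<equiv> map letter w"

text \<open>Nonterminal \<open>0\<close> generates the word problem, \<open>1\<close> the trivial words, \<open>2\<close> the core words,
  and \<open>3\<close>, \<open>4\<close> the reversals of the languages of \<open>1\<close>, \<open>2\<close>.\<close>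

definition wp_grammar :: "(nat \<times> (nat + gen wp_sym) list) set" where
  "wp_grammar = {(0, [Inl 1, Inr Hash, Inl 3]),
     (0, [Inl 1, letter a, Inl 0, letter a, Inl 3]),
     (0, [Inl 1, letter b, Inl 0, letter b, Inl 3]),
     (0, [Inl 1, letter c, Inl 0, letter c, Inl 3]),
     (1, []), (1, [Inl 1, Inl 1]),
     (1, [letter a, Inl 1, letter b, Inl 2, letter b, Inl 1, letter c]),
     (2, [Inl 1, letter b, Inl 2, letter b, Inl 1]), (2, [Inl 1, letter c, Inl 1, letter a, Inl 1]),
     (3, []), (3, [Inl 3, Inl 3]),
     (3, [letter c, Inl 3, letter b, Inl 4, letter b, Inl 3, letter a]),
     (4, [Inl 3, letter b, Inl 4, letter b, Inl 3]),
     (4, [Inl 3, letter a, Inl 3, letter c, Inl 3])}"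

lemma wp_grammar_derives_trivial_core:
  shows "trivial_word d \<Longrightarrow>
      cfg_derives wp_grammar [Inl 1] (letters d) \<and> cfg_derives wp_grammar [Inl 3] (letters (rev d))"
    and "core_word k \<Longrightarrow>
      cfg_derives wp_grammar [Inl 2] (letters k) \<and> cfg_derives wp_grammar [Inl 4] (letters (rev k))"
proof (induction rule: trivial_word_core_word.inducts)
  case trivial_Nil
  show ?case
    by (intro conjI cfg_derives_production[of 1 "[]" _ "[]"]
        cfg_derives_production[of 3 "[]" _ "[]"])
      (simp_all add: wp_grammar_def)
next
  case (trivial_append u v)
  then show ?case
    by (intro conjI cfg_derives_production[of 1 "[Inl 1, Inl 1]" _ "[letters u, letters v]"]
        cfg_derives_production[of 3 "[Inl 3, Inl 3]" _ "[letters (rev v), letters (rev u)]"])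
      (simp_all add: wp_grammar_def)
next
  case (trivial_relator d1 k d2)
  then show ?case
    by (intro conjI
        cfg_derives_production[of 1 "[letter a, Inl 1, letter b, Inl 2, letter b, Inl 1, letter c]" _
          "[[letter a], letters d1, [letter b], letters k, [letter b], letters d2, [letter c]]"]
        cfg_derives_production[of 3 "[letter c, Inl 3, letter b, Inl 4, letter b, Inl 3, letter a]" _
          "[[letter c], letters (rev d2), [letter b], letters (rev k), [letter b], letters (rev d1),
            [letter a]]"])
      (simp_all add: wp_grammar_def)
next
  case (core_b d1 k d2)
  then show ?case
    by (intro conjI
        cfg_derives_production[of 2 "[Inl 1, letter b, Inl 2, letter b, Inl 1]" _
          "[letters d1, [letter b], letters k, [letter b], letters d2]"]
        cfg_derives_production[of 4 "[Inl 3, letter b, Inl 4, letter b, Inl 3]" _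
          "[letters (rev d2), [letter b], letters (rev k), [letter b], letters (rev d1)]"])
      (simp_all add: wp_grammar_def)
next
  case (core_c d1 d2 d3)
  then show ?case
    by (intro conjI
        cfg_derives_production[of 2 "[Inl 1, letter c, Inl 1, letter a, Inl 1]" _
          "[letters d1, [letter c], letters d2, [letter a], letters d3]"]
        cfg_derives_production[of 4 "[Inl 3, letter a, Inl 3, letter c, Inl 3]" _
          "[letters (rev d3), [letter a], letters (rev d2), [letter c], letters (rev d1)]"])
      (simp_all add: wp_grammar_def)
qed

lemma wp_grammar_derives_padded:
  "padded r u \<Longrightarrow> padded r v \<Longrightarrow> trivial_word d \<Longrightarrow> trivial_word d' \<Longrightarrow>
    cfg_derives wp_grammar [Inl 0] (letters (u @ d) @ [Inr Hash] @ letters (rev (v @ d')))"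
proof (induction r arbitrary: u v)
  case Nil
  then have "u = []" "v = []" by (auto elim: padded.cases)
  then show ?case
    using Nil.prems(3,4) wp_grammar_derives_trivial_core(1)
    by (intro cfg_derives_production[of 0 "[Inl 1, Inr Hash, Inl 3]" _
          "[letters d, [Inr Hash], letters (rev d')]"])
      (simp_all add: wp_grammar_def)
next
  case (Cons x r)
  from Cons.prems(1) obtain d1 u' where u: "trivial_word d1" "padded r u'" "u = d1 @ x # u'"
    by (cases rule: padded.cases) auto
  from Cons.prems(2) obtain d2 v' where v: "trivial_word d2" "padded r v'" "v = d2 @ x # v'"
    by (cases rule: padded.cases) auto
  have "(0, [Inl 1, letter x, Inl 0, letter x, Inl 3]) \<in> wp_grammar"
    by (cases x) (simp_all add: wp_grammar_def)
  then show ?case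
    using Cons.IH[OF u(2) v(2) Cons.prems(3,4)] u v wp_grammar_derives_trivial_core(1)
    by (intro cfg_derives_production[of 0 "[Inl 1, letter x, Inl 0, letter x, Inl 3]" _
          "[letters d1, [letter x], letters (u' @ d) @ [Inr Hash] @ letters (rev (v' @ d')),
            [letter x], letters (rev d2)]"])
      simp_all
qed

lemma nf_trivial_append: "nf u = [] \<Longrightarrow> nf v = [] \<Longrightarrow> nf (u @ v) = []"
  using nf_append_Nil[of u "[]" v] by simp

lemma nf_trivial_relator:
  assumes "nf d1 = []" "nf k = nf (core j)" "nf d2 = []"
  shows "nf (a # d1 @ b # k @ b # d2 @ [c]) = []"
proof -
  have "nf (a # d1 @ b # k @ b # d2 @ [c]) = nf ([a, b] @ k @ [b] @ d2 @ [c])"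
    using nf_append_Nil[OF assms(1), of "[a]"] by simp
  also have "\<dots> = nf ([a, b] @ core j @ [b, c])"
    using nf_context[OF assms(2), of "[a, b]"]
      nf_append_Nil[OF assms(3), of "[a, b] @ core j @ [b]"]
    by simp
  also have "\<dots> = []"
    using nf_relator[of "Suc j" "[]" "[]"] by (simp add: relator_Suc)
  finally show ?thesis .
qed

lemma nf_core_b:
  assumes "nf d1 = []" "nf k = nf (core j)" "nf d2 = []"
  shows "nf (d1 @ b # k @ b # d2) = nf (core (Suc j))"
  using nf_append_Nil[OF assms(1), of "[]"] nf_context[OF assms(2), of "[b]"]
    nf_append_Nil[OF assms(3), of "[b] @ core j @ [b]" "[]"]
  by (simp add: core_Suc)

lemma nf_core_c:
  assumes "nf d1 = []" "nf d2 = []" "nf d3 = []"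
  shows "nf (d1 @ c # d2 @ a # d3) = nf (core 0)"
  using nf_append_Nil[OF assms(1), of "[]"] nf_append_Nil[OF assms(2), of "[c]"]
    nf_append_Nil[OF assms(3), of "[c, a]" "[]"]
  by (simp add: core_def)

definition trivial_lang :: "gen wp_sym list set" where
  "trivial_lang = {map Letter d | d. nf d = []}"

definition core_lang :: "gen wp_sym list set" where
  "core_lang = {map Letter k | k j. nf k = nf (core j)}"

definition wp_lang :: "nat \<Rightarrow> gen wp_sym list set" where
  "wp_lang A =
    (if A = 0 then word_problem Pi2_rels
     else if A = 1 then trivial_lang
     else if A = 2 then core_lang
     else if A = 3 then rev ` trivial_lang
     else if A = 4 then rev ` core_lang
     else {})"

lemma trivial_lang_Nil: "[] \<in> trivial_lang"
  by (force simp: trivial_lang_def)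

lemma trivial_lang_append: "x \<in> trivial_lang \<Longrightarrow> y \<in> trivial_lang \<Longrightarrow> x @ y \<in> trivial_lang"
  unfolding trivial_lang_def by (auto simp flip: map_append intro: nf_trivial_append)

lemma trivial_lang_relator:
  assumes "x \<in> trivial_lang" "y \<in> core_lang" "z \<in> trivial_lang"
  shows "Letter a # x @ Letter b # y @ Letter b # z @ [Letter c] \<in> trivial_lang"
proof -
  obtain d1 k j d2 where "x = map Letter d1" "nf d1 = []" "y = map Letter k" "nf k = nf (core j)"
    "z = map Letter d2" "nf d2 = []"
    using assms by (auto simp: trivial_lang_def core_lang_def)
  then show ?thesis
    unfolding trivial_lang_def using nf_trivial_relator
    by (intro CollectI exI[of _ "a # d1 @ b # k @ b # d2 @ [c]"]) simp
qed

lemma core_lang_b: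
  assumes "x \<in> trivial_lang" "y \<in> core_lang" "z \<in> trivial_lang"
  shows "x @ Letter b # y @ Letter b # z \<in> core_lang"
proof -
  obtain d1 k j d2 where "x = map Letter d1" "nf d1 = []" "y = map Letter k" "nf k = nf (core j)"
    "z = map Letter d2" "nf d2 = []"
    using assms by (auto simp: trivial_lang_def core_lang_def)
  then show ?thesis
    unfolding core_lang_def using nf_core_b
    by (intro CollectI exI[of _ "d1 @ b # k @ b # d2"] exI[of _ "Suc j"]) simp
qed

lemma core_lang_c:
  assumes "x \<in> trivial_lang" "y \<in> trivial_lang" "z \<in> trivial_lang"
  shows "x @ Letter c # y @ Letter a # z \<in> core_lang"
proof -
  obtain d1 d2 d3 where "x = map Letter d1" "nf d1 = []" "y = map Letter d2" "nf d2 = []"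
    "z = map Letter d3" "nf d3 = []"
    using assms by (auto simp: trivial_lang_def)
  then show ?thesis
    unfolding core_lang_def using nf_core_c
    by (intro CollectI exI[of _ "d1 @ c # d2 @ a # d3"] exI[of _ 0]) simp
qed

lemma word_problem_Hash:
  assumes "x \<in> trivial_lang" "z \<in> rev ` trivial_lang"
  shows "x @ Hash # z \<in> word_problem Pi2_rels"
proof -
  obtain d1 d2 where "x = map Letter d1" "nf d1 = []" "z = map Letter (rev d2)" "nf d2 = []"
    using assms by (auto simp: trivial_lang_def rev_map)
  then show ?thesis
    unfolding word_problem_def Pi2_eq_iff_nf by (intro CollectI exI[of _ d1] exI[of _ d2]) simp
qed

lemma word_problem_letter:
  assumes "x \<in> trivial_lang" "y \<in> word_problem Pi2_rels" "z \<in> rev ` trivial_lang"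
  shows "x @ Letter g # y @ Letter g # z \<in> word_problem Pi2_rels"
proof -
  obtain d1 u v d2 where x: "x = map Letter d1" "nf d1 = []"
    and y: "y = map Letter u @ [Hash] @ map Letter (rev v)" "nf u = nf v"
    and z: "z = map Letter (rev d2)" "nf d2 = []"
    using assms by (auto simp: trivial_lang_def word_problem_def Pi2_eq_iff_nf rev_map)
  have "nf (d1 @ g # u) = nf (d2 @ g # v)"
    using nf_append_Nil[OF x(2), of "[]" "g # u"] nf_append_Nil[OF z(2), of "[]" "g # v"]
      nf_context[OF y(2), of "[g]" "[]"] by simp
  then show ?thesis
    unfolding word_problem_def Pi2_eq_iff_nf using x y z
    by (intro CollectI exI[of _ "d1 @ g # u"] exI[of _ "d2 @ g # v"]) simp
qed

lemma mem_rev_image: "x \<in> rev ` L \<longleftrightarrow> rev x \<in> L"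
  by (metis image_iff rev_rev_ident)

lemma wp_grammar_sound: "(A, w) \<in> wp_grammar \<Longrightarrow> sentential_lang wp_lang w \<subseteq> wp_lang A"
  unfolding wp_grammar_def
  by (elim insertE emptyE)
    (auto simp: wp_lang_def mem_rev_image trivial_lang_Nil
      intro: word_problem_Hash word_problem_letter trivial_lang_append trivial_lang_relator
        core_lang_b core_lang_c)

theorem Pi2_word_problem_context_free: "context_free (word_problem Pi2_rels)"
proof -
  have "word_problem Pi2_rels \<subseteq> cfg_lang wp_grammar 0"
  proof
    fix w assume "w \<in> word_problem Pi2_rels"
    then obtain u v where w: "w = map Letter u @ [Hash] @ map Letter (rev v)" and "nf u = nf v"
      by (auto simp: word_problem_def Pi2_eq_iff_nf)
    moreover obtain u' d where "padded (nf u) u'" "trivial_word d" "u = u' @ d"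
      using padded_nf by blast
    moreover obtain v' d' where "padded (nf v) v'" "trivial_word d'" "v = v' @ d'"
      using padded_nf by blast
    ultimately show "w \<in> cfg_lang wp_grammar 0"
      using wp_grammar_derives_padded[of "nf u" u' v' d d'] by (simp add: cfg_lang_def comp_def)
  qed
  moreover have "cfg_lang wp_grammar 0 \<subseteq> word_problem Pi2_rels"
    using cfg_lang_subset[of wp_grammar wp_lang 0] wp_grammar_sound by (simp add: wp_lang_def)
  moreover have "finite wp_grammar" by (simp add: wp_grammar_def)
  ultimately show ?thesis unfolding context_free_def by blast
qed

theorem mainTheorem11:
  shows "context_free (word_problem Pi2_rels) \<and>
         (\<forall>e. idempotent_of Pi2 e \<longrightarrow> \<not> finitely_generated_group (maximal_subgroup Pi2 e))"
  using Pi2_word_problem_context_free Pi2_maximal_subgroups_not_finitely_generated by blast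

end
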